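(* For every directed acyclic graph $D$ with distinct nodes $s,t$ and costs $c:E(D)\to\mathbb{R}_+$, the following holds. The minimum cost of an integral solution of the odd path blocker LP $$\min\Big\{\sum_{e\in E(D)}c(e)x_e : \sum_{e\in P}x_e\ge1 \text{ for every odd-length } s\rightarrow t \text{ path } P \text{ in } D,\ x\ge0\Big\}$$ is at most twice the LP optimum. That is, the integrality gap of the odd path blocker LP in DAGs is at most $2$.
   Context: Paths are simple directed paths; odd-length means an odd number of edges. Integral solutions are the $0/1$ vectors $x$ satisfying the path constraints. *)

theory Defs
  imports Complex_Main
begin

text \<open>A finite directed acyclic graph: finite vertex set V, edge set E of ordered pairs
  (no parallel edges), with no directed cycle (acyclic also excludes self-loops).\<close>
definition dag :: "'a set \<Rightarrow> ('a \<times> 'a) set \<Rightarrow> bool" where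
  "dag V E \<longleftrightarrow> finite V \<and> E \<subseteq> V \<times> V \<and> acyclic E"

definition path_edges :: "'a list \<Rightarrow> ('a \<times> 'a) set" where
  "path_edges vs = set (zip vs (tl vs))"

definition is_st_path :: "'a set \<Rightarrow> ('a \<times> 'a) set \<Rightarrow> 'a \<Rightarrow> 'a \<Rightarrow> 'a list \<Rightarrow> bool" where
  "is_st_path V E s t vs \<longleftrightarrow> vs \<noteq> [] \<and> distinct vs \<and> set vs \<subseteq> V \<and>
     hd vs = s \<and> last vs = t \<and> path_edges vs \<subseteq> E"

definition odd_st_path :: "'a set \<Rightarrow> ('a \<times> 'a) set \<Rightarrow> 'a \<Rightarrow> 'a \<Rightarrow> 'a list \<Rightarrow> bool" where
  "odd_st_path V E s t vs \<longleftrightarrow> is_st_path V E s t vs \<and> odd (length vs - 1)"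

definition opb_feasible :: "'a set \<Rightarrow> ('a \<times> 'a) set \<Rightarrow> 'a \<Rightarrow> 'a \<Rightarrow> (('a \<times> 'a) \<Rightarrow> real) \<Rightarrow> bool" where
  "opb_feasible V E s t x \<longleftrightarrow> (\<forall>e\<in>E. x e \<ge> 0) \<and>
     (\<forall>P. odd_st_path V E s t P \<longrightarrow> (\<Sum>e\<in>path_edges P. x e) \<ge> 1)"

definition opb_integral :: "'a set \<Rightarrow> ('a \<times> 'a) set \<Rightarrow> 'a \<Rightarrow> 'a \<Rightarrow> (('a \<times> 'a) \<Rightarrow> real) \<Rightarrow> bool" where
  "opb_integral V E s t x \<longleftrightarrow> opb_feasible V E s t x \<and> (\<forall>e\<in>E. x e \<in> {0, 1})"

definition lp_cost :: "('a \<times> 'a) set \<Rightarrow> (('a \<times> 'a) \<Rightarrow> real) \<Rightarrow> (('a \<times> 'a) \<Rightarrow> real) \<Rightarrow> real" where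
  "lp_cost E c x = (\<Sum>e\<in>E. c e * x e)"

definition opb_lp_opt where
  "opb_lp_opt V E s t c = Inf {lp_cost E c x | x. opb_feasible V E s t x}"

definition opb_int_opt where
  "opb_int_opt V E s t c = Inf {lp_cost E c x | x. opb_integral V E s t x}"

end

theory Submission imports Defs "HOL-Analysis.Analysis" begin

text \<open>Let \<open>d(v,q)\<close> be the \<open>x\<close>-length of a shortest \<open>s\<close>-\<open>v\<close> path of parity \<open>q\<close>, truncated at 1.
  Then \<open>d(s,even) = 0\<close>, \<open>d(t,odd) \<ge> 1\<close>, and along every edge \<open>(a,b)\<close> the potential
  \<open>d(b,\<not>q)\<close> exceeds \<open>d(a,q)\<close> by at most \<open>x(a,b)\<close>; acyclicity guarantees that extending a
  path by an edge keeps it simple. For a threshold \<open>\<theta> \<in> (0,1]\<close>, cutting every edge along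
  which some parity class crosses \<open>\<theta>\<close> blocks every odd \<open>s\<close>-\<open>t\<close> path, since the potentials
  along such a path (alternating parities) rise from below \<open>\<theta>\<close> to at least \<open>\<theta>\<close>. Each edge is
  cut for a set of thresholds of measure at most \<open>2 x(a,b)\<close>, one interval per parity, so
  averaging over \<open>\<theta>\<close> yields an integral blocker of cost at most twice that of \<open>x\<close>.\<close>

lemma path_edges_Cons_Cons: "path_edges (a # b # vs) = insert (a, b) (path_edges (b # vs))"
  by (simp add: path_edges_def)

lemma path_edges_singleton [simp]: "path_edges [a] = {}"
  by (simp add: path_edges_def)

lemma finite_path_edges [simp]: "finite (path_edges vs)"
  by (simp add: path_edges_def)

lemma path_edges_subset_set: "(u, w) \<in> path_edges vs \<Longrightarrow> u \<in> set vs \<and> w \<in> set vs"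
  unfolding path_edges_def by (metis in_set_zipE list.set_sel(2) tl_Nil)

lemma path_edges_snoc: "vs \<noteq> [] \<Longrightarrow> path_edges (vs @ [b]) = insert (last vs, b) (path_edges vs)"
proof (induction vs)
  case (Cons a vs)
  then show ?case by (cases vs) (auto simp: path_edges_Cons_Cons)
qed simp

lemma nth_in_path_edges: "Suc i < length vs \<Longrightarrow> (vs ! i, vs ! Suc i) \<in> path_edges vs"
  unfolding path_edges_def set_zip by (auto simp: nth_tl intro!: exI[of _ i])

lemma path_reaches_last:
  assumes "path_edges vs \<subseteq> E" and "b \<in> set vs"
  shows "(b, last vs) \<in> E\<^sup>*"
  using assms
proof (induction vs arbitrary: b)
  case (Cons a vs)
  show ?case
  proof (cases vs)
    case (Cons a' vs')
    have "(a, a') \<in> E" and sub: "path_edges vs \<subseteq> E"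
      using Cons.prems Cons by (auto simp: path_edges_Cons_Cons)
    moreover have "(a', last vs) \<in> E\<^sup>*" using Cons.IH[OF sub, of a'] Cons by simp
    ultimately have "(a, last vs) \<in> E\<^sup>*" by (meson converse_rtrancl_into_rtrancl)
    then show ?thesis using Cons.IH[OF sub] Cons.prems Cons by auto
  qed (use Cons in simp)
qed simp

lemma odd_st_path_has_edge: "odd_st_path V E s t vs \<Longrightarrow> path_edges vs \<noteq> {}"
  unfolding odd_st_path_def
  by (cases vs; cases "tl vs") (auto simp: path_edges_Cons_Cons)

lemma exists_threshold_crossing:
  fixes f :: "nat \<Rightarrow> real"
  assumes "f 0 < \<theta>" and "\<theta> \<le> f k"
  shows "\<exists>i<k. f i < \<theta> \<and> \<theta> \<le> f (Suc i)"
  using assms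
proof (induction k)
  case (Suc k)
  then show ?case by (cases "f k < \<theta>") (auto, meson less_SucI not_le)
qed simp

lemma exists_le_integral_on_unit_interval:
  fixes f g :: "real \<Rightarrow> real"
  assumes fin: "finite (f ` {0<..1})" and g: "integrable lborel g" "\<And>\<theta>. 0 \<le> g \<theta>"
    and le: "\<And>\<theta>. \<theta> \<in> {0<..1} \<Longrightarrow> f \<theta> \<le> g \<theta>"
  shows "\<exists>\<theta>\<in>{0<..1}. f \<theta> \<le> integral\<^sup>L lborel g"
proof -
  obtain \<theta>\<^sub>0 where \<theta>\<^sub>0: "\<theta>\<^sub>0 \<in> {0<..1}" "f \<theta>\<^sub>0 = Min (f ` {0<..1})"
    using Min_in[OF fin] by fastforce
  have dominated: "f \<theta>\<^sub>0 * indicator {0<..1} \<theta> \<le> g \<theta>" for \<theta> :: real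
    using \<theta>\<^sub>0 Min_le[OF fin, of "f \<theta>"] le[of \<theta>] g(2)[of \<theta>] by (auto simp: indicator_def)
  have "(LINT \<theta>|lborel. f \<theta>\<^sub>0 * indicator {0<..1::real} \<theta>) \<le> integral\<^sup>L lborel g"
    using dominated g(1)
    by (intro integral_mono integrable_mult_right integrable_real_indicator) auto
  then show ?thesis using \<theta>\<^sub>0(1) by (intro bexI[of _ \<theta>\<^sub>0]) auto
qed

definition path_weight :: "(('a \<times> 'a) \<Rightarrow> real) \<Rightarrow> 'a list \<Rightarrow> real" where
  "path_weight x vs = (\<Sum>e\<in>path_edges vs. x e)"

text \<open>The parity \<open>q\<close> is \<open>True\<close> for paths with an odd number of edges; the \<open>1\<close> in the infimum
  truncates the potential and makes it well-defined when no such path exists.\<close>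
definition parity_dist ::
    "'a set \<Rightarrow> ('a \<times> 'a) set \<Rightarrow> 'a \<Rightarrow> (('a \<times> 'a) \<Rightarrow> real) \<Rightarrow> 'a \<Rightarrow> bool \<Rightarrow> real" where
  "parity_dist V E s x v q =
     Inf (insert 1 {path_weight x vs | vs. is_st_path V E s v vs \<and> odd (length vs - 1) = q})"

context
  fixes V :: "'a set" and E :: "('a \<times> 'a) set" and s :: 'a and x :: "('a \<times> 'a) \<Rightarrow> real"
  assumes x_nonneg: "\<forall>e\<in>E. 0 \<le> x e"
begin

lemma bdd_below_parity_dist_set:
  "bdd_below (insert 1 {path_weight x vs | vs. is_st_path V E s v vs \<and> odd (length vs - 1) = q})"
  using x_nonneg
  by (intro bdd_belowI[of _ 0]) (auto simp: is_st_path_def path_weight_def intro!: sum_nonneg)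

lemma parity_dist_le_1: "parity_dist V E s x v q \<le> 1"
  unfolding parity_dist_def by (rule cInf_lower[OF _ bdd_below_parity_dist_set]) auto

lemma parity_dist_le_path_weight:
  "is_st_path V E s v vs \<Longrightarrow> odd (length vs - 1) = q \<Longrightarrow> parity_dist V E s x v q \<le> path_weight x vs"
  unfolding parity_dist_def by (rule cInf_lower[OF _ bdd_below_parity_dist_set]) auto

lemma parity_dist_source: "s \<in> V \<Longrightarrow> parity_dist V E s x s False \<le> 0"
  using parity_dist_le_path_weight[of s "[s]" False]
  by (simp add: is_st_path_def path_weight_def)

lemma parity_dist_edge:
  assumes dag: "dag V E" and ab: "(a, b) \<in> E"
  shows "parity_dist V E s x b (\<not> q) \<le> parity_dist V E s x a q + x (a, b)"
proof -
  have "parity_dist V E s x b (\<not> q) - x (a, b) \<le> w"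
    if "w \<in> insert 1 {path_weight x vs | vs. is_st_path V E s a vs \<and> odd (length vs - 1) = q}" for w
    using that
  proof
    assume "w = 1"
    then show ?thesis using parity_dist_le_1[of b "\<not> q"] x_nonneg ab by force
  next
    assume "w \<in> {path_weight x vs | vs. is_st_path V E s a vs \<and> odd (length vs - 1) = q}"
    then obtain vs where w: "w = path_weight x vs" and vs: "is_st_path V E s a vs"
      and parity: "odd (length vs - 1) = q" by auto
    have ne: "vs \<noteq> []" and last: "last vs = a" and sub: "path_edges vs \<subseteq> E"
      using vs by (auto simp: is_st_path_def)
    have b_new: "b \<notin> set vs"
    proof
      assume "b \<in> set vs"
      then have "(b, b) \<in> E\<^sup>+"
        using path_reaches_last[OF sub] last ab by (metis rtrancl_into_trancl1)
      then show False using dag by (auto simp: dag_def acyclic_def)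
    qed
    have "b \<in> V" using dag ab by (auto simp: dag_def)
    then have ext: "is_st_path V E s b (vs @ [b])"
      using vs b_new ab ne last by (auto simp: is_st_path_def path_edges_snoc)
    have "odd (length (vs @ [b]) - 1) = (\<not> q)" using parity ne by (cases vs) auto
    moreover have "(a, b) \<notin> path_edges vs" using b_new path_edges_subset_set by metis
    then have "path_weight x (vs @ [b]) = w + x (a, b)"
      using ne last by (simp add: w path_weight_def path_edges_snoc)
    ultimately show ?thesis using parity_dist_le_path_weight[OF ext] by simp
  qed
  then have "parity_dist V E s x b (\<not> q) - x (a, b) \<le> parity_dist V E s x a q"
    unfolding parity_dist_def[of V E s x a q] by (intro cInf_greatest) auto
  then show ?thesis by simp
qed

end

lemma parity_dist_target:
  "opb_feasible V E s t x \<Longrightarrow> 1 \<le> parity_dist V E s x t True"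
  unfolding parity_dist_def
  by (rule cInf_greatest) (auto simp: opb_feasible_def odd_st_path_def path_weight_def)

definition threshold_cut :: "('a \<times> 'a) set \<Rightarrow> ('a \<Rightarrow> bool \<Rightarrow> real) \<Rightarrow> real \<Rightarrow> ('a \<times> 'a) set" where
  "threshold_cut E d \<theta> = {(a, b) \<in> E. \<exists>q. d a q < \<theta> \<and> \<theta> \<le> d b (\<not> q)}"

lemma threshold_cut_integral:
  assumes s: "s \<in> V" and feas: "opb_feasible V E s t x" and \<theta>: "0 < \<theta>" "\<theta> \<le> 1"
  shows "opb_integral V E s t (indicator (threshold_cut E (parity_dist V E s x) \<theta>))"
    (is "opb_integral V E s t (indicator ?C)")
  unfolding opb_integral_def opb_feasible_def
proof (intro conjI allI impI ballI)
  fix vs assume vs: "odd_st_path V E s t vs"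
  have x: "\<forall>e\<in>E. 0 \<le> x e" using feas by (simp add: opb_feasible_def)
  define k where "k = length vs - 1"
  define f where "f i = parity_dist V E s x (vs ! i) (odd i)" for i
  have "vs \<noteq> []" and sub: "path_edges vs \<subseteq> E" and "odd k"
    and "hd vs = s" "last vs = t"
    using vs by (auto simp: odd_st_path_def is_st_path_def k_def)
  then have "f 0 < \<theta>" and "\<theta> \<le> f k"
    using parity_dist_source[OF x s] parity_dist_target[OF feas] \<theta>
    by (auto simp: f_def hd_conv_nth last_conv_nth k_def)
  then obtain i where i: "i < k" "f i < \<theta>" "\<theta> \<le> f (Suc i)"
    using exists_threshold_crossing by blast
  have edge: "(vs ! i, vs ! Suc i) \<in> path_edges vs"
    using i(1) by (intro nth_in_path_edges) (simp add: k_def)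
  then have "(vs ! i, vs ! Suc i) \<in> ?C"
    using sub i unfolding threshold_cut_def f_def by auto
  then have "indicator ?C (vs ! i, vs ! Suc i) \<le> (\<Sum>e\<in>path_edges vs. indicator ?C e :: real)"
    by (intro member_le_sum[OF edge]) auto
  then show "1 \<le> (\<Sum>e\<in>path_edges vs. indicator ?C e :: real)"
    using \<open>(vs ! i, vs ! Suc i) \<in> ?C\<close> by simp
qed (auto simp: indicator_def)

lemma integrable_indicator_Ioc: "integrable lborel (indicator {l<..u} :: real \<Rightarrow> real)"
  by (cases "l \<le> u") auto

lemma measure_Ioc_le: "measure lborel {l<..u} \<le> max 0 (u - l :: real)"
  by (cases "l \<le> u") auto

lemma exists_integral_within_factor_2:
  assumes dag: "dag V E" and s: "s \<in> V" and c: "\<forall>e\<in>E. 0 \<le> c e"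
    and feas: "opb_feasible V E s t x"
  shows "\<exists>y. opb_integral V E s t y \<and> lp_cost E c y \<le> 2 * lp_cost E c x"
proof -
  have x: "\<forall>e\<in>E. 0 \<le> x e" using feas by (simp add: opb_feasible_def)
  have finE: "finite E" using dag unfolding dag_def by (meson finite_SigmaI finite_subset)
  define d where "d = parity_dist V E s x"
  define cost where "cost \<theta> = lp_cost E c (indicator (threshold_cut E d \<theta>))" for \<theta>
  define I where "I e q = {d (fst e) q <.. d (snd e) (\<not> q)}" for e q
  define g where "g \<theta> = (\<Sum>e\<in>E. c e * (indicator (I e False) \<theta> + indicator (I e True) \<theta>))"
    for \<theta> :: real
  have "cost ` {0<..1} \<subseteq> (\<lambda>C. lp_cost E c (indicator C)) ` Pow E"
    by (auto simp: cost_def threshold_cut_def)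
  then have fin: "finite (cost ` {0<..1})" using finE finite_subset by blast
  have g_int: "integrable lborel g"
    unfolding g_def I_def
    by (intro Bochner_Integration.integrable_sum integrable_mult_right Bochner_Integration.integrable_add
        integrable_indicator_Ioc)
  have g_nonneg: "0 \<le> g \<theta>" for \<theta>
    unfolding g_def using c by (intro sum_nonneg) auto
  have cost_le_g: "cost \<theta> \<le> g \<theta>" for \<theta>
    unfolding cost_def lp_cost_def g_def
  proof (intro sum_mono mult_left_mono)
    fix e assume "e \<in> E"
    then show "0 \<le> c e" using c by simp
    show "indicator (threshold_cut E d \<theta>) e \<le> (indicator (I e False) \<theta> + indicator (I e True) \<theta> :: real)"
    proof (cases "e \<in> threshold_cut E d \<theta>")
      case True
      then obtain q where "\<theta> \<in> I e q" by (auto simp: threshold_cut_def I_def)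
      with True show ?thesis by (cases q) (auto simp: indicator_def)
    qed auto
  qed
  have "integral\<^sup>L lborel g = (\<Sum>e\<in>E. c e * (measure lborel (I e False) + measure lborel (I e True)))"
    unfolding g_def I_def by (simp add: integrable_indicator_Ioc integral_sum integral_add)
  also have "\<dots> \<le> (\<Sum>e\<in>E. c e * (2 * x e))"
  proof (intro sum_mono mult_left_mono)
    fix e assume e: "e \<in> E"
    then show "0 \<le> c e" using c by simp
    have "measure lborel (I e q) \<le> x e" for q
    proof -
      have "measure lborel (I e q) \<le> max 0 (d (snd e) (\<not> q) - d (fst e) q)"
        by (simp add: I_def measure_Ioc_le)
      also have "\<dots> \<le> x e"
        using e x parity_dist_edge[OF x dag, where s = s and a = "fst e" and b = "snd e" and q = q]
        by (auto simp: d_def)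
      finally show ?thesis .
    qed
    from this[of False] this[of True]
    show "measure lborel (I e False) + measure lborel (I e True) \<le> 2 * x e" by simp
  qed
  also have "\<dots> = 2 * lp_cost E c x"
    by (simp add: lp_cost_def sum_distrib_left algebra_simps)
  finally have g_bound: "integral\<^sup>L lborel g \<le> 2 * lp_cost E c x" .
  obtain \<theta> where \<theta>: "\<theta> \<in> {0<..1}" "cost \<theta> \<le> integral\<^sup>L lborel g"
    using exists_le_integral_on_unit_interval[OF fin g_int g_nonneg cost_le_g] by blast
  have "opb_integral V E s t (indicator (threshold_cut E d \<theta>))"
    using threshold_cut_integral[OF s feas] \<theta>(1) by (simp add: d_def)
  moreover have "lp_cost E c (indicator (threshold_cut E d \<theta>)) \<le> 2 * lp_cost E c x"
    using \<theta>(2) g_bound by (simp add: cost_def)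
  ultimately show ?thesis by blast
qed

lemma opb_feasible_const_1: "opb_feasible V E s t (\<lambda>_. 1)"
  unfolding opb_feasible_def
proof (intro conjI allI impI ballI)
  fix vs assume "odd_st_path V E s t vs"
  then have "path_edges vs \<noteq> {}" by (rule odd_st_path_has_edge)
  then show "1 \<le> (\<Sum>e\<in>path_edges vs. 1 :: real)" by (simp add: Suc_le_eq card_gt_0_iff)
qed auto

lemma opb_int_opt_le_lp_cost:
  assumes "\<forall>e\<in>E. 0 \<le> c e" and "opb_integral V E s t y"
  shows "opb_int_opt V E s t c \<le> lp_cost E c y"
proof -
  have bdd: "bdd_below {lp_cost E c x | x. opb_integral V E s t x}"
    using assms(1) by (intro bdd_belowI[of _ 0])
      (auto simp: lp_cost_def opb_integral_def opb_feasible_def intro!: sum_nonneg)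
  show ?thesis unfolding opb_int_opt_def by (rule cInf_lower[OF _ bdd]) (use assms(2) in auto)
qed

theorem corollary3p6:
  fixes V :: "'a set" and E :: "('a \<times> 'a) set" and s t :: 'a
    and c :: "('a \<times> 'a) \<Rightarrow> real"
  assumes "dag V E" and "s \<in> V" and "t \<in> V" and "s \<noteq> t"
    and "\<forall>e\<in>E. c e \<ge> 0"
  shows "opb_int_opt V E s t c \<le> 2 * opb_lp_opt V E s t c"
proof -
  have "opb_int_opt V E s t c / 2 \<le> opb_lp_opt V E s t c"
    unfolding opb_lp_opt_def
  proof (rule cInf_greatest)
    show "{lp_cost E c x | x. opb_feasible V E s t x} \<noteq> {}"
      using opb_feasible_const_1[of V E s t] by auto
  next
    fix z assume "z \<in> {lp_cost E c x | x. opb_feasible V E s t x}"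
    then obtain x where "z = lp_cost E c x" and "opb_feasible V E s t x" by auto
    then obtain y where y: "opb_integral V E s t y" and "lp_cost E c y \<le> 2 * z"
      using exists_integral_within_factor_2[OF assms(1,2,5)] by blast
    moreover have "opb_int_opt V E s t c \<le> lp_cost E c y"
      using opb_int_opt_le_lp_cost[OF assms(5) y] .
    ultimately show "opb_int_opt V E s t c / 2 \<le> z" by simp
  qed
  then show ?thesis by simp
qed

end
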